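(* For all integers $m \ge 1$ and $n \ge 1$, $$\mathrm{Var}[\xi_{m,n}] = (m-1)\cdot S_{m,n}.$$
   Context: Let $m\ge 1$, $n\ge 1$ be integers and let $\{\alpha_1,\dots,\alpha_m\}$ be an alphabet of $m$ symbols. A random string is generated as follows: starting from the empty string, repeatedly append a symbol chosen uniformly at random from the alphabet (independently of all previous choices), and stop at the first moment the string ends with $n$ consecutive copies of $\alpha_1$. The random variable $\xi_{m,n}$ is the length of the resulting string. Let $G_{m,n}=(V,E)$ be the complete $m$-ary rooted tree of height $n$ (the root is at level $0$, every node at level $<n$ has exactly $m$ children, and there are $m^d$ nodes at level $d$ for $0\le d\le n$; $V$ includes the root). For $v\in V$, $\pi(v)\subseteq E$ denotes the set of edges of the unique path from $v$ to the root. Define $S_{m,n} := \sum_{(a,b)\in V\times V} |\pi(a)\cap\pi(b)|$ (the sum over all ordered pairs of nodes, including pairs with $a=b$). *)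

theory Defs
  imports "HOL-Probability.Probability"
begin

text \<open>Symbols of the alphabet are 0,...,m-1; symbol 0 plays the role of alpha_1.
  The infinite i.i.d. uniform symbol sequence is a stream; the generated string is
  its prefix of length xi.\<close>

definition sym_space :: "nat \<Rightarrow> nat stream measure" where
  "sym_space m = stream_space (measure_pmf (pmf_of_set {..<m}))"

definition xi :: "nat \<Rightarrow> nat \<Rightarrow> nat stream \<Rightarrow> nat" where
  "xi m n \<omega> = (LEAST k. n \<le> k \<and> (\<forall>i\<in>{k - n..<k}. \<omega> !! i = 0))"

text \<open>Complete m-ary rooted tree of height n: nodes are words over {0..<m} of length at
  most n (the root is the empty word); the edges join a node v to its parent butlast v.\<close>
definition tree_nodes :: "nat \<Rightarrow> nat \<Rightarrow> nat list set" where
  "tree_nodes m n = {v. set v \<subseteq> {..<m} \<and> length v \<le> n}"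

definition tree_edges :: "nat \<Rightarrow> nat \<Rightarrow> (nat list \<times> nat list) set" where
  "tree_edges m n = {(butlast v, v) | v. v \<in> tree_nodes m n \<and> v \<noteq> []}"

definition path_edges :: "nat list \<Rightarrow> (nat list \<times> nat list) set" where
  "path_edges v = {(take k v, take (Suc k) v) | k. k < length v}"

definition S :: "nat \<Rightarrow> nat \<Rightarrow> nat" where
  "S m n = (\<Sum>(a, b) \<in> tree_nodes m n \<times> tree_nodes m n. card (path_edges a \<inter> path_edges b))"

end

theory Submission
  imports Defs "HOL-Library.Sublist"
begin

(*
  Let the state be the length of the current run of copies of alpha_1 (symbol 0). Reading a
  symbol moves the state from j to j + 1 with probability 1/m and to 0 otherwise, and xi is the
  time the state first reaches n from 0. If T_j is the remaining time from state j, then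
  T_j = 1 + T_j' with j' the next state, so conditioning on the first symbol yields
    m E[T_j] = m + E[T_(j+1)] + (m - 1) E[T_0],
    m E[T_j^2] = 2 m E[T_j] - m + E[T_(j+1)^2] + (m - 1) E[T_0^2],
  with E[T_n] = E[T_n^2] = 0. Bounding the truncations of T_j by explicit supersolutions shows that
  these moments are finite; the recurrences then determine them uniquely, e.g.
  E[T_j] = m^(j+1) + ... + m^n. On the tree side, |pi(a) /\ pi(b)| is the length of the longest
  common prefix of the words a and b, which gives S_(m,n+1) = m (N_n^2 + S_(m,n)) with N_n the
  number of nodes. Both sides of the identity then equal
  (m^(2n+2) - (2n+1)(m-1) m^(n+1) - m) / (m-1)^2.
*)

lemma first_step_solution_unique:
  fixes u v c :: "nat \<Rightarrow> real"
  assumes u: "\<And>j. j < n \<Longrightarrow> a * u j = c j + u (Suc j) + (a - 1) * u 0"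
    and v: "\<And>j. j < n \<Longrightarrow> a * v j = c j + v (Suc j) + (a - 1) * v 0"
    and "u n = 0" "v n = 0" "j \<le> n"
  shows "u j = v j"
proof -
  define d where "d k = u k - v k" for k
  have "d k = d 0" if "k \<le> n" for k
    using that
  proof (induction k)
    case (Suc k)
    then have "d k = d 0" and "a * d k = d (Suc k) + (a - 1) * d 0"
      using u[of k] v[of k] by (simp_all add: d_def algebra_simps)
    then show ?case by (simp add: algebra_simps)
  qed simp
  with assms(3-5) show ?thesis
    by (metis d_def order_refl eq_iff_diff_eq_0)
qed

lemma ennreal_SUP_power2:
  fixes f :: "nat \<Rightarrow> ennreal"
  assumes "incseq f"
  shows "(SUP i. f i)\<^sup>2 = (SUP i. (f i)\<^sup>2)"
proof (rule antisym)
  show "(SUP i. (f i)\<^sup>2) \<le> (SUP i. f i)\<^sup>2"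
    by (rule SUP_least) (intro power_mono SUP_upper, auto)
  have "(SUP i. f i)\<^sup>2 = (SUP i. SUP k. f i * f k)"
    by (simp add: power2_eq_square SUP_mult_left_ennreal SUP_mult_right_ennreal) (rule SUP_commute)
  also have "\<dots> \<le> (SUP i. (f i)\<^sup>2)"
  proof (intro SUP_least)
    fix i k
    have "f i * f k \<le> (f (max i k))\<^sup>2"
      using assms by (auto simp: power2_eq_square incseq_def intro: mult_mono)
    also have "\<dots> \<le> (SUP i. (f i)\<^sup>2)"
      by (rule SUP_upper) simp
    finally show "f i * f k \<le> (SUP i. (f i)\<^sup>2)" .
  qed
  finally show "(SUP i. f i)\<^sup>2 \<le> (SUP i. (f i)\<^sup>2)" .
qed

lemma (in prob_space) nn_integral_one_plus:
  "f \<in> borel_measurable M \<Longrightarrow> (\<integral>\<^sup>+x. 1 + f x \<partial>M) = 1 + (\<integral>\<^sup>+x. f x \<partial>M)"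
  by (simp add: nn_integral_add emeasure_space_1)

lemma (in prob_space) nn_integral_one_plus_square:
  assumes [measurable]: "f \<in> borel_measurable M"
  shows "(\<integral>\<^sup>+x. (1 + f x)\<^sup>2 \<partial>M) = 1 + 2 * (\<integral>\<^sup>+x. f x \<partial>M) + (\<integral>\<^sup>+x. (f x)\<^sup>2 \<partial>M)"
proof -
  have "(\<lambda>x. (1 + f x)\<^sup>2) = (\<lambda>x. 1 + 2 * f x + (f x)\<^sup>2)"
    by (simp add: fun_eq_iff power2_sum algebra_simps)
  then show ?thesis
    by (simp add: nn_integral_add nn_integral_cmult emeasure_space_1)
qed

section \<open>Runs of the symbol 0 and hitting times\<close>

definition run_step :: "nat \<Rightarrow> nat \<Rightarrow> nat" where
  "run_step j x = (if x = 0 then Suc j else 0)"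

fun run_len :: "nat \<Rightarrow> nat stream \<Rightarrow> nat \<Rightarrow> nat" where
  "run_len j \<omega> 0 = j"
| "run_len j \<omega> (Suc k) = run_step (run_len j \<omega> k) (\<omega> !! k)"

lemma run_len_Suc_shift: "run_len j \<omega> (Suc k) = run_len (run_step j (shd \<omega>)) (stl \<omega>) k"
  by (induction k) auto

lemma le_run_len_0_iff:
  "r \<le> run_len 0 \<omega> k \<longleftrightarrow> r \<le> k \<and> (\<forall>i\<in>{k - r..<k}. \<omega> !! i = 0)"
proof (induction k arbitrary: r)
  case (Suc k)
  show ?case
  proof (cases r)
    case (Suc r')
    then have "{Suc k - r..<Suc k} = insert k {k - r'..<k}" by auto
    with Suc.IH[of r'] \<open>r = Suc r'\<close> show ?thesis by (auto simp: run_step_def)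
  qed simp
qed simp

lemma xi_eq_Least_run_len: "xi m n \<omega> = (LEAST k. n \<le> run_len 0 \<omega> k)"
  unfolding xi_def le_run_len_0_iff ..

(* hit_trunc n N j \<omega> = min N T, where T is the number of symbols of \<omega> read until the run length,
   starting from j, reaches n. *)
fun hit_trunc :: "nat \<Rightarrow> nat \<Rightarrow> nat \<Rightarrow> nat stream \<Rightarrow> nat" where
  "hit_trunc n 0 j \<omega> = 0"
| "hit_trunc n (Suc N) j \<omega> =
    (if n \<le> j then 0 else Suc (hit_trunc n N (run_step j (shd \<omega>)) (stl \<omega>)))"

lemma hit_trunc_first_hit:
  "\<forall>i<k. run_len j \<omega> i < n \<Longrightarrow> n \<le> run_len j \<omega> k \<Longrightarrow> hit_trunc n N j \<omega> = min N k"
proof (induction N arbitrary: j \<omega> k)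
  case (Suc N)
  show ?case
  proof (cases k)
    case (Suc k')
    with Suc.prems have "j < n" by (metis run_len.simps(1) zero_less_Suc)
    moreover have "hit_trunc n N (run_step j (shd \<omega>)) (stl \<omega>) = min N k'"
      using Suc.prems \<open>k = Suc k'\<close> by (intro Suc.IH) (auto simp: run_len_Suc_shift[symmetric])
    ultimately show ?thesis using \<open>k = Suc k'\<close> by simp
  qed (use Suc.prems in simp)
qed simp

lemma hit_trunc_no_hit: "\<forall>i<N. run_len j \<omega> i < n \<Longrightarrow> hit_trunc n N j \<omega> = N"
proof (induction N arbitrary: j \<omega>)
  case (Suc N)
  then have "j < n" by (metis run_len.simps(1) zero_less_Suc)
  moreover have "hit_trunc n N (run_step j (shd \<omega>)) (stl \<omega>) = N"
    using Suc.prems by (intro Suc.IH) (auto simp: run_len_Suc_shift[symmetric])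
  ultimately show ?case by simp
qed simp

lemma hit_trunc_start: "n \<le> j \<Longrightarrow> hit_trunc n N j \<omega> = 0"
  by (cases N) auto

lemma incseq_hit_trunc: "incseq (\<lambda>N. hit_trunc n N j \<omega>)"
proof (rule incseq_SucI)
  show "hit_trunc n N j \<omega> \<le> hit_trunc n (Suc N) j \<omega>" for N
  proof (induction N arbitrary: j \<omega>)
    case (Suc N)
    then show ?case by simp
  qed simp
qed

lemma measurable_hit_trunc [measurable]:
  "hit_trunc n N j \<in> stream_space (measure_pmf p) \<rightarrow>\<^sub>M count_space UNIV"
proof (induction N arbitrary: j)
  case 0
  have "hit_trunc n 0 j = (\<lambda>_. 0)"
    by auto
  then show ?case by simp
next
  case (Suc N)
  note [measurable] = Suc.IH
  have eq: "hit_trunc n (Suc N) j = (\<lambda>\<omega>. if n \<le> j then 0 else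
      Suc (if shd \<omega> = 0 then hit_trunc n N (Suc j) (stl \<omega>) else hit_trunc n N 0 (stl \<omega>)))"
    by (simp add: run_step_def fun_eq_iff)
  show ?case
    unfolding eq by measurable
qed

(* The possibly infinite T itself, given as a supremum so that monotone convergence applies. *)
definition hit_time :: "nat \<Rightarrow> nat \<Rightarrow> nat stream \<Rightarrow> ennreal" where
  "hit_time n j \<omega> = (SUP N. of_nat (hit_trunc n N j \<omega>))"

lemma measurable_hit_time [measurable]: "hit_time n j \<in> borel_measurable (stream_space (measure_pmf p))"
  unfolding hit_time_def by measurable

lemma hit_time_start: "n \<le> j \<Longrightarrow> hit_time n j \<omega> = 0"
  by (simp add: hit_time_def hit_trunc_start)

lemma hit_time_step: "j < n \<Longrightarrow> hit_time n j \<omega> = 1 + hit_time n (run_step j (shd \<omega>)) (stl \<omega>)"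
proof -
  assume "j < n"
  let ?f = "\<lambda>N. of_nat (hit_trunc n N j \<omega>) :: ennreal"
  have "hit_time n j \<omega> = ?f 0 \<squnion> (SUP N. ?f (Suc N))"
    unfolding hit_time_def by (subst UNIV_nat_eq) (simp only: SUP_insert image_comp o_def)
  also have "\<dots> = (SUP N. 1 + of_nat (hit_trunc n N (run_step j (shd \<omega>)) (stl \<omega>)))"
    using \<open>j < n\<close> by (simp add: add.commute bot_ennreal[symmetric])
  also have "\<dots> = 1 + hit_time n (run_step j (shd \<omega>)) (stl \<omega>)"
    unfolding hit_time_def by (rule ennreal_SUP_add_right[symmetric]) simp
  finally show ?thesis .
qed

lemma hit_time_0_eq_xi:
  assumes "hit_time n 0 \<omega> \<noteq> \<infinity>"
  shows "hit_time n 0 \<omega> = of_nat (xi m n \<omega>)"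
proof -
  have "\<exists>k. n \<le> run_len 0 \<omega> k"
  proof (rule ccontr)
    assume "\<not> ?thesis"
    then have "hit_time n 0 \<omega> = (SUP N. of_nat N)"
      by (simp add: hit_time_def hit_trunc_no_hit not_le)
    with assms ennreal_SUP_of_nat_eq_top show False by simp
  qed
  then obtain k where "n \<le> run_len 0 \<omega> k" "\<forall>i<k. run_len 0 \<omega> i < n" "xi m n \<omega> = k"
    unfolding xi_eq_Least_run_len by (metis LeastI_ex not_less_Least not_le)
  then have "hit_time n 0 \<omega> = (SUP N. of_nat (min N k))"
    by (simp add: hit_time_def hit_trunc_first_hit)
  also have "\<dots> = of_nat k"
    by (rule antisym) (auto intro!: SUP_least SUP_upper2[of k])
  finally show ?thesis using \<open>xi m n \<omega> = k\<close> by simp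
qed

section \<open>Common path edges in the tree\<close>

abbreviation lcp_len :: "nat list \<Rightarrow> nat list \<Rightarrow> nat" where
  "lcp_len a b \<equiv> length (longest_common_prefix a b)"

lemma path_edges_eq_image: "path_edges v = (\<lambda>k. (take k v, take (Suc k) v)) ` {..<length v}"
  by (auto simp: path_edges_def)

lemma path_edges_Nil [simp]: "path_edges [] = {}"
  by (simp add: path_edges_def)

lemma path_edges_Cons:
  "path_edges (x # xs) = insert ([], [x]) (map_prod ((#) x) ((#) x) ` path_edges xs)"
  by (simp add: path_edges_eq_image lessThan_Suc_eq_insert_0 image_image)

lemma finite_path_edges: "finite (path_edges v)"
  by (simp add: path_edges_eq_image)

lemma card_path_edges_Int: "card (path_edges a \<inter> path_edges b) = lcp_len a b"
proof (induction a b rule: longest_common_prefix.induct)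
  case (1 x xs y ys)
  show ?case
  proof (cases "x = y")
    case True
    let ?h = "map_prod ((#) x) ((#) x)" and ?I = "path_edges xs \<inter> path_edges ys"
    have "inj ?h"
      by (auto intro: injI)
    then have "path_edges (x # xs) \<inter> path_edges (y # ys) = insert ([], [x]) (?h ` ?I)"
      unfolding True path_edges_Cons by (auto simp: image_Int)
    moreover have "([], [x]) \<notin> ?h ` ?I" and "card (?h ` ?I) = card ?I"
      using \<open>inj ?h\<close> by (auto simp: card_image inj_on_subset)
    ultimately show ?thesis
      using 1 True by (simp add: finite_path_edges)
  next
    case False
    then have "path_edges (x # xs) \<inter> path_edges (y # ys) = {}"
      by (auto simp: path_edges_Cons)
    with False show ?thesis by simp
  qed
qed simp_all

lemma tree_nodes_0: "tree_nodes m 0 = {[]}"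
  by (auto simp: tree_nodes_def)

lemma tree_nodes_Suc:
  "tree_nodes m (Suc n) = insert [] ((\<lambda>(c, v). c # v) ` ({..<m} \<times> tree_nodes m n))"
proof (rule set_eqI)
  show "v \<in> tree_nodes m (Suc n) \<longleftrightarrow> v \<in> insert [] ((\<lambda>(c, v). c # v) ` ({..<m} \<times> tree_nodes m n))" for v
    by (cases v) (auto simp: tree_nodes_def image_iff)
qed

lemma finite_tree_nodes: "finite (tree_nodes m n)"
  by (induction n) (simp_all add: tree_nodes_0 tree_nodes_Suc)

lemma sum_tree_nodes_Suc:
  "(\<Sum>a\<in>tree_nodes m (Suc n). f a) = f [] + (\<Sum>c<m. \<Sum>v\<in>tree_nodes m n. f (c # v))"
proof -
  let ?P = "{..<m} \<times> tree_nodes m n"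
  have "inj_on (\<lambda>(c, v). c # v) ?P" and "[] \<notin> (\<lambda>(c, v). c # v) ` ?P"
    by (auto intro: inj_onI)
  then have "(\<Sum>a\<in>tree_nodes m (Suc n). f a) = f [] + (\<Sum>(c, v)\<in>?P. f (c # v))"
    by (simp add: tree_nodes_Suc finite_tree_nodes sum.reindex case_prod_unfold)
  then show ?thesis
    by (simp add: sum.cartesian_product)
qed

lemma card_tree_nodes_Suc: "card (tree_nodes m (Suc n)) = Suc (m * card (tree_nodes m n))"
  using sum_tree_nodes_Suc[of "\<lambda>_. 1 :: nat" m n] by simp

lemma S_eq_sum_lcp_len: "S m n = (\<Sum>a\<in>tree_nodes m n. \<Sum>b\<in>tree_nodes m n. lcp_len a b)"
  unfolding S_def card_path_edges_Int by (simp add: sum.cartesian_product)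

lemma S_0: "S m 0 = 0"
  by (simp add: S_eq_sum_lcp_len tree_nodes_0)

lemma S_Suc: "S m (Suc n) = m * (card (tree_nodes m n) ^ 2 + S m n)"
proof -
  let ?T = "tree_nodes m n"
  have "S m (Suc n) = (\<Sum>c<m. \<Sum>v\<in>?T. \<Sum>c'<m. \<Sum>w\<in>?T. lcp_len (c # v) (c' # w))"
    by (simp add: S_eq_sum_lcp_len sum_tree_nodes_Suc)
  also have "\<dots> = (\<Sum>c<m. \<Sum>v\<in>?T. \<Sum>w\<in>?T. Suc (lcp_len v w))"
  proof -
    have "(\<Sum>c'<m. \<Sum>w\<in>?T. lcp_len (c # v) (c' # w)) = (\<Sum>w\<in>?T. Suc (lcp_len v w))"
      if "c < m" for c v
    proof -
      have "(\<Sum>c'<m. \<Sum>w\<in>?T. lcp_len (c # v) (c' # w))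
          = (\<Sum>c'<m. if c' = c then \<Sum>w\<in>?T. Suc (lcp_len v w) else 0)"
        by (intro sum.cong) auto
      with that show ?thesis by simp
    qed
    then show ?thesis by simp
  qed
  also have "\<dots> = m * (card ?T ^ 2 + S m n)"
    by (simp only: S_eq_sum_lcp_len Suc_eq_plus1_left sum.distrib) (simp add: power2_eq_square distrib_left)
  finally show ?thesis .
qed

section \<open>Closed forms\<close>

lemma card_tree_nodes_closed: "(real m - 1) * real (card (tree_nodes m n)) = real m ^ Suc n - 1"
  by (induction n) (simp_all add: tree_nodes_0 card_tree_nodes_Suc algebra_simps)

lemma S_closed:
  "(real m - 1) ^ 3 * real (S m n)
    = (real m ^ Suc n)\<^sup>2 - (2 * real n + 1) * (real m - 1) * real m ^ Suc n - real m"
proof (induction n)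
  case 0
  then show ?case by (simp add: S_0 power2_eq_square algebra_simps)
next
  case (Suc n)
  let ?A = "real m ^ Suc n"
  have "(real m - 1) ^ 3 * real (S m (Suc n))
      = real m * ((real m - 1) * ((real m - 1) * real (card (tree_nodes m n)))\<^sup>2
          + (real m - 1) ^ 3 * real (S m n))"
    by (simp add: S_Suc algebra_simps power2_eq_square power3_eq_cube)
  also have "\<dots> = real m * ((real m - 1) * (?A - 1)\<^sup>2 + ?A\<^sup>2 - (2 * real n + 1) * (real m - 1) * ?A - real m)"
    by (simp only: card_tree_nodes_closed Suc.IH) simp
  also have "\<dots> = (real m ^ Suc (Suc n))\<^sup>2 - (2 * real (Suc n) + 1) * (real m - 1) * real m ^ Suc (Suc n) - real m"
    by (simp add: algebra_simps power2_eq_square)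
  finally show ?case .
qed

definition hit_mean :: "nat \<Rightarrow> nat \<Rightarrow> nat \<Rightarrow> real" where
  "hit_mean m n j = (\<Sum>i = Suc j..n. real m ^ i)"

lemma hit_mean_start: "n \<le> j \<Longrightarrow> hit_mean m n j = 0"
  by (simp add: hit_mean_def)

lemma hit_mean_nonneg: "0 \<le> hit_mean m n j"
  unfolding hit_mean_def by (intro sum_nonneg) simp

lemma hit_mean_le_0: "hit_mean m n j \<le> hit_mean m n 0"
  unfolding hit_mean_def by (rule sum_mono2) auto

lemma hit_mean_closed: "j \<le> n \<Longrightarrow> (real m - 1) * hit_mean m n j = real m ^ Suc n - real m ^ Suc j"
proof (induction n)
  case (Suc n)
  show ?case
  proof (cases "j = Suc n")
    case False
    with Suc.prems have "hit_mean m (Suc n) j = hit_mean m n j + real m ^ Suc n"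
      by (simp add: hit_mean_def sum.cl_ivl_Suc)
    with False Suc show ?thesis by (simp add: algebra_simps)
  qed (simp add: hit_mean_def)
qed (simp add: hit_mean_def)

lemma hit_mean_rec:
  assumes "j < n"
  shows "real m * hit_mean m n j = real m + hit_mean m n (Suc j) + (real m - 1) * hit_mean m n 0"
proof -
  have "real m * hit_mean m n j = (\<Sum>i = Suc (Suc j)..Suc n. real m ^ i)"
    unfolding hit_mean_def sum_distrib_left sum.shift_bounds_cl_Suc_ivl by simp
  also have "\<dots> = hit_mean m n (Suc j) + real m ^ Suc n"
    using assms by (simp add: hit_mean_def sum.cl_ivl_Suc)
  finally show ?thesis
    using hit_mean_closed[of 0 n m] by simp
qed

lemma hit_mean_sq_supersolution:
  assumes "j < n"
  shows "1 + 2 * hit_mean m n (Suc j) + 2 * hit_mean m n 0 * hit_mean m n (Suc j)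
      + (real m - 1) * (1 + 2 * hit_mean m n 0 + 2 * hit_mean m n 0 * hit_mean m n 0)
    \<le> real m * (2 * hit_mean m n 0 * hit_mean m n j)"
proof -
  let ?x = "hit_mean m n"
  define K where "K = ?x (Suc j) + (real m - 1) * ?x 0"
  have K: "K = real m * ?x j - real m"
    using hit_mean_rec[OF assms, of m] by (simp add: K_def)
  have "1 + 2 * ?x (Suc j) + 2 * ?x 0 * ?x (Suc j) + (real m - 1) * (1 + 2 * ?x 0 + 2 * ?x 0 * ?x 0)
      = real m + 2 * K + 2 * ?x 0 * K"
    by (simp add: K_def algebra_simps)
  also have "\<dots> = real m * (2 * ?x 0 * ?x j - (1 + 2 * (?x 0 - ?x j)))"
    by (simp add: K algebra_simps)
  also have "\<dots> \<le> real m * (2 * ?x 0 * ?x j)"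
    using hit_mean_le_0[of m n j] by (intro mult_left_mono) auto
  finally show ?thesis .
qed

(* Candidate for E[T_j^2] - E[T_0^2]: the second-moment recurrence solved for its (j+1)-st term. *)
fun hit_sq_offset :: "nat \<Rightarrow> nat \<Rightarrow> nat \<Rightarrow> real" where
  "hit_sq_offset m n 0 = 0"
| "hit_sq_offset m n (Suc j) = real m * hit_sq_offset m n j + real m - 2 * real m * hit_mean m n j"

definition hit_sq_mean :: "nat \<Rightarrow> nat \<Rightarrow> nat \<Rightarrow> real" where
  "hit_sq_mean m n j = hit_sq_offset m n j - hit_sq_offset m n n"

lemma hit_sq_mean_end: "hit_sq_mean m n n = 0"
  by (simp add: hit_sq_mean_def)

lemma hit_sq_mean_rec:
  "real m * hit_sq_mean m n j
    = 2 * real m * hit_mean m n j - real m + hit_sq_mean m n (Suc j) + (real m - 1) * hit_sq_mean m n 0"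
  by (simp add: hit_sq_mean_def algebra_simps)

lemma hit_sq_offset_closed:
  "j \<le> n \<Longrightarrow> (real m - 1)\<^sup>2 * hit_sq_offset m n j
    = (real m ^ Suc j - real m) * (real m - 1 - 2 * real m ^ Suc n) + 2 * real j * real m ^ Suc j * (real m - 1)"
proof (induction j)
  case (Suc j)
  let ?A = "real m ^ Suc n" and ?B = "real m ^ Suc j"
  have mean: "(real m - 1) * hit_mean m n j = ?A - ?B"
    using Suc.prems by (intro hit_mean_closed) simp
  have "(real m - 1)\<^sup>2 * hit_sq_offset m n (Suc j)
      = real m * ((real m - 1)\<^sup>2 * hit_sq_offset m n j) + real m * (real m - 1)\<^sup>2
        - 2 * real m * (real m - 1) * ((real m - 1) * hit_mean m n j)"
    by (simp add: algebra_simps power2_eq_square)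
  also have "\<dots> = real m * ((?B - real m) * (real m - 1 - 2 * ?A) + 2 * real j * ?B * (real m - 1))
      + real m * (real m - 1)\<^sup>2 - 2 * real m * (real m - 1) * (?A - ?B)"
    using Suc by (simp only: mean)
  also have "\<dots> = (real m ^ Suc (Suc j) - real m) * (real m - 1 - 2 * ?A)
      + 2 * real (Suc j) * real m ^ Suc (Suc j) * (real m - 1)"
    by (simp add: algebra_simps power2_eq_square)
  finally show ?case .
qed simp

lemma hit_sq_mean_minus_square:
  assumes "1 \<le> m"
  shows "hit_sq_mean m n 0 - (hit_mean m n 0)\<^sup>2 = real (m - 1) * real (S m n)"
proof (cases "m = 1")
  case True
  have mean: "j \<le> n \<Longrightarrow> hit_mean (Suc 0) n j = real n - real j" for j
    by (simp add: hit_mean_def)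
  have "j \<le> n \<Longrightarrow> hit_sq_offset (Suc 0) n j = (real j)\<^sup>2 - 2 * real n * real j" for j
    by (induction j) (simp_all add: mean power2_eq_square algebra_simps)
  with True show ?thesis
    by (simp add: hit_sq_mean_def mean power2_eq_square)
next
  case False
  let ?A = "real m ^ Suc n"
  have "(real m - 1)\<^sup>2 * (hit_sq_mean m n 0 - (hit_mean m n 0)\<^sup>2)
      = - ((real m - 1)\<^sup>2 * hit_sq_offset m n n) - ((real m - 1) * hit_mean m n 0)\<^sup>2"
    by (simp add: hit_sq_mean_def algebra_simps power2_eq_square)
  also have "\<dots> = - ((?A - real m) * (real m - 1 - 2 * ?A) + 2 * real n * ?A * (real m - 1)) - (?A - real m)\<^sup>2"
    by (simp add: hit_sq_offset_closed hit_mean_closed)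
  also have "\<dots> = (real m - 1)\<^sup>2 * ((real m - 1) * real (S m n))"
    using S_closed[of m n] by (simp add: algebra_simps power2_eq_square power3_eq_cube)
  finally show ?thesis
    using False assms by (simp add: of_nat_diff)
qed

section \<open>First-step analysis\<close>

(* Expectation over the next symbol of a quantity equal to a after symbol 0 and to b after any of
   the m - 1 other symbols. *)
definition step_avg :: "nat \<Rightarrow> ennreal \<Rightarrow> ennreal \<Rightarrow> ennreal" where
  "step_avg m a b = (a + of_nat (m - 1) * b) / of_nat m"

lemma step_avg_mono: "a \<le> a' \<Longrightarrow> b \<le> b' \<Longrightarrow> step_avg m a b \<le> step_avg m a' b'"
  unfolding step_avg_def by (intro divide_right_mono_ennreal add_mono mult_left_mono) auto

lemma step_avg_ennreal:
  assumes "1 \<le> m" "0 \<le> a" "0 \<le> b"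
  shows "step_avg m (ennreal a) (ennreal b) = ennreal ((a + (real m - 1) * b) / real m)"
proof -
  have num: "ennreal a + of_nat (m - 1) * ennreal b = ennreal (a + (real m - 1) * b)"
    using assms by (simp add: ennreal_of_nat_eq_real_of_nat ennreal_mult'' of_nat_diff)
  have den: "(of_nat m :: ennreal) = ennreal (real m)"
    by (rule ennreal_of_nat_eq_real_of_nat)
  show ?thesis
    unfolding step_avg_def num den using assms by (intro divide_ennreal) auto
qed

lemma ennreal_eq_step_avgD:
  assumes "1 \<le> m" "0 \<le> x" "0 \<le> a" "0 \<le> b"
    and "ennreal x = step_avg m (ennreal a) (ennreal b)"
  shows "real m * x = a + (real m - 1) * b"
proof -
  have "0 \<le> (a + (real m - 1) * b) / real m"
    using assms by simp
  then have "x = (a + (real m - 1) * b) / real m"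
    using assms by (simp add: step_avg_ennreal)
  then show ?thesis
    using assms by simp
qed

lemma step_avg_ennreal_le:
  assumes "1 \<le> m" "0 \<le> a" "0 \<le> b" and "a + (real m - 1) * b \<le> real m * z"
  shows "step_avg m (ennreal a) (ennreal b) \<le> ennreal z"
proof -
  have "(a + (real m - 1) * b) / real m \<le> z"
    using assms by (simp add: divide_le_eq mult.commute)
  with assms show ?thesis
    by (simp add: step_avg_ennreal ennreal_leI)
qed

lemma measurable_xi [measurable]: "xi m n \<in> stream_space (measure_pmf p) \<rightarrow>\<^sub>M count_space UNIV"
  unfolding xi_def[abs_def] by measurable

locale uniform_symbols =
  fixes m :: nat
  assumes m_ge_1: "1 \<le> m"

sublocale uniform_symbols \<subseteq> prob_space "stream_space (measure_pmf (pmf_of_set {..<m}))"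
  by (rule prob_space.prob_space_stream_space[OF prob_space_measure_pmf])

context uniform_symbols
begin

abbreviation \<Omega> :: "nat stream measure" where
  "\<Omega> \<equiv> stream_space (measure_pmf (pmf_of_set {..<m}))"

lemma nn_integral_run_step:
  assumes [measurable]: "\<And>k. H k \<in> borel_measurable \<Omega>"
  shows "(\<integral>\<^sup>+\<omega>. H (run_step j (shd \<omega>)) (stl \<omega>) \<partial>\<Omega>)
    = step_avg m (\<integral>\<^sup>+\<omega>. H (Suc j) \<omega> \<partial>\<Omega>) (\<integral>\<^sup>+\<omega>. H 0 \<omega> \<partial>\<Omega>)"
proof -
  define I where "I k = (\<integral>\<^sup>+\<omega>. H k \<omega> \<partial>\<Omega>)" for k
  have eq: "(\<lambda>\<omega>. H (run_step j (shd \<omega>)) (stl \<omega>))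
      = (\<lambda>\<omega>. if shd \<omega> = 0 then H (Suc j) (stl \<omega>) else H 0 (stl \<omega>))"
    by (auto simp: run_step_def fun_eq_iff)
  have "(\<integral>\<^sup>+\<omega>. H (run_step j (shd \<omega>)) (stl \<omega>) \<partial>\<Omega>) = (\<integral>\<^sup>+x. I (run_step j x) \<partial>measure_pmf (pmf_of_set {..<m}))"
    unfolding I_def
    by (subst prob_space.nn_integral_stream_space[OF prob_space_measure_pmf]) (simp_all add: eq)
  also have "\<dots> = (\<Sum>x<m. I (run_step j x)) / of_nat m"
    using m_ge_1 by (subst nn_integral_pmf_of_set) (auto simp: lessThan_empty_iff)
  also have "(\<Sum>x<m. I (run_step j x)) = I (Suc j) + of_nat (m - 1) * I 0"
  proof -
    obtain m' where m': "m = Suc m'"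
      using m_ge_1 by (cases m) auto
    show ?thesis
      unfolding m' sum.lessThan_Suc_shift by (simp add: run_step_def)
  qed
  finally show ?thesis
    by (simp add: I_def step_avg_def)
qed

lemma first_step_mean:
  assumes [measurable]: "\<And>k. g k \<in> borel_measurable \<Omega>"
    and "\<And>\<omega>. f \<omega> = 1 + g (run_step j (shd \<omega>)) (stl \<omega>)"
  shows "(\<integral>\<^sup>+\<omega>. f \<omega> \<partial>\<Omega>) = step_avg m (1 + (\<integral>\<^sup>+\<omega>. g (Suc j) \<omega> \<partial>\<Omega>)) (1 + (\<integral>\<^sup>+\<omega>. g 0 \<omega> \<partial>\<Omega>))"
  using nn_integral_run_step[of "\<lambda>k \<omega>. 1 + g k \<omega>" j] by (simp add: assms(2) nn_integral_one_plus)

lemma first_step_square: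
  assumes [measurable]: "\<And>k. g k \<in> borel_measurable \<Omega>"
    and "\<And>\<omega>. f \<omega> = 1 + g (run_step j (shd \<omega>)) (stl \<omega>)"
  shows "(\<integral>\<^sup>+\<omega>. (f \<omega>)\<^sup>2 \<partial>\<Omega>)
    = step_avg m (1 + 2 * (\<integral>\<^sup>+\<omega>. g (Suc j) \<omega> \<partial>\<Omega>) + (\<integral>\<^sup>+\<omega>. (g (Suc j) \<omega>)\<^sup>2 \<partial>\<Omega>))
        (1 + 2 * (\<integral>\<^sup>+\<omega>. g 0 \<omega> \<partial>\<Omega>) + (\<integral>\<^sup>+\<omega>. (g 0 \<omega>)\<^sup>2 \<partial>\<Omega>))"
  using nn_integral_run_step[of "\<lambda>k \<omega>. (1 + g k \<omega>)\<^sup>2" j]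
  by (simp add: assms(2) nn_integral_one_plus_square)

lemma hit_trunc_Suc_step:
  "j < n \<Longrightarrow> (of_nat (hit_trunc n (Suc N) j \<omega>) :: ennreal)
    = 1 + of_nat (hit_trunc n N (run_step j (shd \<omega>)) (stl \<omega>))"
  by (simp add: add.commute)

lemma nn_integral_hit_trunc_le:
  "(\<integral>\<^sup>+\<omega>. of_nat (hit_trunc n N j \<omega>) \<partial>\<Omega>) \<le> ennreal (hit_mean m n j)"
proof (induction N arbitrary: j)
  case (Suc N)
  let ?x = "hit_mean m n"
  show ?case
  proof (cases "j < n")
    case True
    have "(\<integral>\<^sup>+\<omega>. of_nat (hit_trunc n (Suc N) j \<omega>) \<partial>\<Omega>)
        = step_avg m (1 + (\<integral>\<^sup>+\<omega>. of_nat (hit_trunc n N (Suc j) \<omega>) \<partial>\<Omega>))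
            (1 + (\<integral>\<^sup>+\<omega>. of_nat (hit_trunc n N 0 \<omega>) \<partial>\<Omega>))"
      using True by (intro first_step_mean hit_trunc_Suc_step) simp
    also have "\<dots> \<le> step_avg m (ennreal (1 + ?x (Suc j))) (ennreal (1 + ?x 0))"
      by (intro step_avg_mono) (simp_all add: hit_mean_nonneg add_left_mono Suc.IH)
    also have "\<dots> \<le> ennreal (?x j)"
      using hit_mean_rec[OF True, of m] m_ge_1
      by (intro step_avg_ennreal_le) (simp_all add: hit_mean_nonneg algebra_simps)
    finally show ?thesis .
  qed (simp add: hit_trunc_start)
qed simp

lemma nn_integral_hit_trunc_sq_le:
  "(\<integral>\<^sup>+\<omega>. (of_nat (hit_trunc n N j \<omega>))\<^sup>2 \<partial>\<Omega>) \<le> ennreal (2 * hit_mean m n 0 * hit_mean m n j)"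
proof (induction N arbitrary: j)
  case (Suc N)
  let ?x = "hit_mean m n"
  let ?z = "\<lambda>k. 2 * ?x 0 * ?x k"
  let ?M1 = "\<lambda>k. \<integral>\<^sup>+\<omega>. of_nat (hit_trunc n N k \<omega>) \<partial>\<Omega>"
  let ?M2 = "\<lambda>k. \<integral>\<^sup>+\<omega>. (of_nat (hit_trunc n N k \<omega>))\<^sup>2 \<partial>\<Omega>"
  show ?case
  proof (cases "j < n")
    case True
    have "(\<integral>\<^sup>+\<omega>. (of_nat (hit_trunc n (Suc N) j \<omega>))\<^sup>2 \<partial>\<Omega>)
        = step_avg m (1 + 2 * ?M1 (Suc j) + ?M2 (Suc j)) (1 + 2 * ?M1 0 + ?M2 0)"
      using True by (intro first_step_square hit_trunc_Suc_step) simp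
    also have "\<dots> \<le> step_avg m (1 + 2 * ennreal (?x (Suc j)) + ennreal (?z (Suc j)))
        (1 + 2 * ennreal (?x 0) + ennreal (?z 0))"
      by (intro step_avg_mono add_mono mult_left_mono order_refl nn_integral_hit_trunc_le Suc.IH) simp_all
    also have "\<dots> = step_avg m (ennreal (1 + 2 * ?x (Suc j) + ?z (Suc j))) (ennreal (1 + 2 * ?x 0 + ?z 0))"
      by (simp add: hit_mean_nonneg numeral_mult_ennreal)
    also have "\<dots> \<le> ennreal (?z j)"
      using hit_mean_sq_supersolution[OF True, of m] m_ge_1
      by (intro step_avg_ennreal_le) (simp_all add: hit_mean_nonneg)
    finally show ?thesis .
  qed (simp add: hit_trunc_start)
qed simp

lemma nn_integral_hit_time_le: "(\<integral>\<^sup>+\<omega>. hit_time n j \<omega> \<partial>\<Omega>) \<le> ennreal (hit_mean m n j)"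
proof -
  have "incseq (\<lambda>N \<omega>. of_nat (hit_trunc n N j \<omega>) :: ennreal)"
    using incseq_hit_trunc by (auto simp: incseq_def le_fun_def)
  then have "(\<integral>\<^sup>+\<omega>. hit_time n j \<omega> \<partial>\<Omega>) = (SUP N. \<integral>\<^sup>+\<omega>. of_nat (hit_trunc n N j \<omega>) \<partial>\<Omega>)"
    unfolding hit_time_def by (intro nn_integral_monotone_convergence_SUP) simp_all
  also have "\<dots> \<le> ennreal (hit_mean m n j)"
    by (intro SUP_least nn_integral_hit_trunc_le)
  finally show ?thesis .
qed

lemma nn_integral_hit_time_sq_le:
  "(\<integral>\<^sup>+\<omega>. (hit_time n j \<omega>)\<^sup>2 \<partial>\<Omega>) \<le> ennreal (2 * hit_mean m n 0 * hit_mean m n j)"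
proof -
  have "incseq (\<lambda>N \<omega>. (of_nat (hit_trunc n N j \<omega>) :: ennreal)\<^sup>2)"
    using incseq_hit_trunc by (auto simp: incseq_def le_fun_def intro: power_mono)
  moreover have "(hit_time n j \<omega>)\<^sup>2 = (SUP N. (of_nat (hit_trunc n N j \<omega>))\<^sup>2)" for \<omega>
    unfolding hit_time_def using incseq_hit_trunc by (intro ennreal_SUP_power2) (auto simp: incseq_def)
  ultimately have "(\<integral>\<^sup>+\<omega>. (hit_time n j \<omega>)\<^sup>2 \<partial>\<Omega>)
      = (SUP N. \<integral>\<^sup>+\<omega>. (of_nat (hit_trunc n N j \<omega>))\<^sup>2 \<partial>\<Omega>)"
    by (simp add: nn_integral_monotone_convergence_SUP)
  also have "\<dots> \<le> ennreal (2 * hit_mean m n 0 * hit_mean m n j)"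
    by (intro SUP_least nn_integral_hit_trunc_sq_le)
  finally show ?thesis .
qed

lemma nn_integral_hit_time:
  assumes "j \<le> n"
  shows "(\<integral>\<^sup>+\<omega>. hit_time n j \<omega> \<partial>\<Omega>) = ennreal (hit_mean m n j)"
proof -
  define e where "e k = enn2real (\<integral>\<^sup>+\<omega>. hit_time n k \<omega> \<partial>\<Omega>)" for k
  have E: "(\<integral>\<^sup>+\<omega>. hit_time n k \<omega> \<partial>\<Omega>) = ennreal (e k)" for k
    unfolding e_def by (intro ennreal_enn2real[symmetric] le_less_trans[OF nn_integral_hit_time_le]) simp
  have e_nonneg: "0 \<le> e k" for k
    by (simp add: e_def)
  have rec: "real m * e k = real m + e (Suc k) + (real m - 1) * e 0" if "k < n" for k
  proof -
    have "ennreal (e k) = step_avg m (1 + ennreal (e (Suc k))) (1 + ennreal (e 0))"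
      unfolding E[symmetric] using that by (intro first_step_mean hit_time_step) simp_all
    then have "real m * e k = (1 + e (Suc k)) + (real m - 1) * (1 + e 0)"
      using m_ge_1 by (intro ennreal_eq_step_avgD) (simp_all add: e_nonneg)
    then show ?thesis
      by (simp add: algebra_simps)
  qed
  have "e n = 0"
    by (simp add: e_def hit_time_start)
  with rec hit_mean_rec[of _ n m] have "e j = hit_mean m n j"
    by (rule first_step_solution_unique) (simp_all add: hit_mean_start assms)
  then show ?thesis
    by (simp add: E)
qed

lemma nn_integral_hit_time_sq:
  assumes "j \<le> n"
  shows "(\<integral>\<^sup>+\<omega>. (hit_time n j \<omega>)\<^sup>2 \<partial>\<Omega>) = ennreal (hit_sq_mean m n j)"
proof -
  let ?x = "hit_mean m n"
  define q where "q k = enn2real (\<integral>\<^sup>+\<omega>. (hit_time n k \<omega>)\<^sup>2 \<partial>\<Omega>)" for k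
  have Q: "(\<integral>\<^sup>+\<omega>. (hit_time n k \<omega>)\<^sup>2 \<partial>\<Omega>) = ennreal (q k)" for k
    unfolding q_def by (intro ennreal_enn2real[symmetric] le_less_trans[OF nn_integral_hit_time_sq_le]) simp
  have q_nonneg: "0 \<le> q k" for k
    by (simp add: q_def)
  have rec: "real m * q k = (2 * real m * ?x k - real m) + q (Suc k) + (real m - 1) * q 0" if "k < n" for k
  proof -
    have "(\<integral>\<^sup>+\<omega>. (hit_time n k \<omega>)\<^sup>2 \<partial>\<Omega>)
        = step_avg m (1 + 2 * (\<integral>\<^sup>+\<omega>. hit_time n (Suc k) \<omega> \<partial>\<Omega>) + (\<integral>\<^sup>+\<omega>. (hit_time n (Suc k) \<omega>)\<^sup>2 \<partial>\<Omega>))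
            (1 + 2 * (\<integral>\<^sup>+\<omega>. hit_time n 0 \<omega> \<partial>\<Omega>) + (\<integral>\<^sup>+\<omega>. (hit_time n 0 \<omega>)\<^sup>2 \<partial>\<Omega>))"
      using that by (intro first_step_square hit_time_step) simp_all
    then have "ennreal (q k) = step_avg m (ennreal (1 + 2 * ?x (Suc k) + q (Suc k))) (ennreal (1 + 2 * ?x 0 + q 0))"
      using that by (simp add: Q nn_integral_hit_time hit_mean_nonneg numeral_mult_ennreal q_nonneg)
    then have "real m * q k = (1 + 2 * ?x (Suc k) + q (Suc k)) + (real m - 1) * (1 + 2 * ?x 0 + q 0)"
      using m_ge_1 by (intro ennreal_eq_step_avgD) (simp_all add: q_nonneg hit_mean_nonneg)
    then show ?thesis
      using hit_mean_rec[OF that, of m] by (simp add: algebra_simps)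
  qed
  have "q n = 0"
    by (simp add: q_def hit_time_start)
  with rec hit_sq_mean_rec[of m n] have "q j = hit_sq_mean m n j"
    by (rule first_step_solution_unique) (simp_all add: hit_sq_mean_end assms)
  then show ?thesis
    by (simp add: Q)
qed

lemma AE_hit_time_0_eq_xi: "AE \<omega> in \<Omega>. hit_time n 0 \<omega> = of_nat (xi m n \<omega>)"
proof -
  have "(\<integral>\<^sup>+\<omega>. hit_time n 0 \<omega> \<partial>\<Omega>) \<noteq> \<infinity>"
    by (simp add: nn_integral_hit_time)
  then have "AE \<omega> in \<Omega>. hit_time n 0 \<omega> \<noteq> \<infinity>"
    by (intro nn_integral_PInf_AE) simp
  then show ?thesis
    by eventually_elim (rule hit_time_0_eq_xi)
qed

lemma integrable_xi: "integrable \<Omega> (\<lambda>\<omega>. real (xi m n \<omega>))"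
  and expectation_xi: "expectation (\<lambda>\<omega>. real (xi m n \<omega>)) = hit_mean m n 0"
proof -
  have "(\<integral>\<^sup>+\<omega>. ennreal (real (xi m n \<omega>)) \<partial>\<Omega>) = (\<integral>\<^sup>+\<omega>. hit_time n 0 \<omega> \<partial>\<Omega>)"
    using AE_hit_time_0_eq_xi[of n]
    by (intro nn_integral_cong_AE) (auto simp: ennreal_of_nat_eq_real_of_nat)
  then have "(\<integral>\<^sup>+\<omega>. ennreal (real (xi m n \<omega>)) \<partial>\<Omega>) = ennreal (hit_mean m n 0)"
    by (simp add: nn_integral_hit_time)
  then show "integrable \<Omega> (\<lambda>\<omega>. real (xi m n \<omega>))" "expectation (\<lambda>\<omega>. real (xi m n \<omega>)) = hit_mean m n 0"
    by (simp_all add: nn_integral_eq_integrable hit_mean_nonneg)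
qed

lemma integrable_xi_sq: "integrable \<Omega> (\<lambda>\<omega>. (real (xi m n \<omega>))\<^sup>2)"
  and expectation_xi_sq: "expectation (\<lambda>\<omega>. (real (xi m n \<omega>))\<^sup>2) = hit_sq_mean m n 0"
proof -
  have "(\<integral>\<^sup>+\<omega>. ennreal ((real (xi m n \<omega>))\<^sup>2) \<partial>\<Omega>) = (\<integral>\<^sup>+\<omega>. (hit_time n 0 \<omega>)\<^sup>2 \<partial>\<Omega>)"
    using AE_hit_time_0_eq_xi[of n]
    by (intro nn_integral_cong_AE) (auto simp: ennreal_of_nat_eq_real_of_nat ennreal_power)
  then have "(\<integral>\<^sup>+\<omega>. ennreal ((real (xi m n \<omega>))\<^sup>2) \<partial>\<Omega>) = ennreal (hit_sq_mean m n 0)"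
    by (simp add: nn_integral_hit_time_sq)
  moreover have "0 \<le> hit_sq_mean m n 0"
  proof -
    have "0 \<le> (hit_mean m n 0)\<^sup>2 + real (m - 1) * real (S m n)"
      by simp
    then show ?thesis
      using hit_sq_mean_minus_square[OF m_ge_1, of n] by linarith
  qed
  ultimately show "integrable \<Omega> (\<lambda>\<omega>. (real (xi m n \<omega>))\<^sup>2)"
    "expectation (\<lambda>\<omega>. (real (xi m n \<omega>))\<^sup>2) = hit_sq_mean m n 0"
    by (simp_all add: nn_integral_eq_integrable)
qed

lemma variance_xi: "variance (\<lambda>\<omega>. real (xi m n \<omega>)) = real (m - 1) * real (S m n)"
proof -
  have "variance (\<lambda>\<omega>. real (xi m n \<omega>))
      = expectation (\<lambda>\<omega>. (real (xi m n \<omega>))\<^sup>2) - (expectation (\<lambda>\<omega>. real (xi m n \<omega>)))\<^sup>2"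
    by (rule variance_eq[OF integrable_xi integrable_xi_sq])
  also have "\<dots> = hit_sq_mean m n 0 - (hit_mean m n 0)\<^sup>2"
    by (simp only: expectation_xi expectation_xi_sq)
  also have "\<dots> = real (m - 1) * real (S m n)"
    by (rule hit_sq_mean_minus_square[OF m_ge_1])
  finally show ?thesis .
qed

end

theorem mainTheorem1:
  fixes m n :: nat
  assumes "m \<ge> 1" and "n \<ge> 1"
  shows "prob_space.variance (sym_space m) (\<lambda>\<omega>. real (xi m n \<omega>)) = real (m - 1) * real (S m n)"
proof -
  interpret uniform_symbols m
    using assms(1) by unfold_locales
  show ?thesis
    using variance_xi[of n] by (simp add: sym_space_def)
qed

end
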